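(* Let $(X,d,f)$ be a TDS. If $\widetilde h_{top}(f,X)=h_{top}(f,X)$, then $$h_{top}(f,X)=\lim_{\varepsilon\to0}\lim_{\alpha\to0}h^\alpha_{top}(f,X,\varepsilon)=\sup_{\varepsilon>0}\inf_{\alpha>0}h^\alpha_{top}(f,X,\varepsilon).$$
   Context: A TDS $(X,d,f)$: compact metric space and continuous $f$; $h_{top}(f,X)$ is the classical topological entropy. $d_n^\alpha(x,y)=\max_{0\le i\le n-1}e^{\alpha i}d(f^ix,f^iy)$; $r_n(f,\alpha,X,\varepsilon)$ is the minimal cardinality of a set $E$ such that every $x\in X$ has $y\in E$ with $d_n^\alpha(x,y)<\varepsilon$; $h^\alpha_{top}(f,X,\varepsilon)=\limsup_{n\to\infty}\frac1n\log r_n(f,\alpha,X,\varepsilon)$. Neutralized topological entropy: $B_n(x,r)=\{y:d(f^jx,f^jy)<r,\ 0\le j\le n-1\}$; $r_n(X,e^{-n\varepsilon})$ is the smallest number of balls $B_n(x,e^{-n\varepsilon})$ needed to cover $X$; $\widetilde h_{top}(f,X,\varepsilon)=\limsup_{n\to\infty}\frac1n\log r_n(X,e^{-n\varepsilon})$ and $\widetilde h_{top}(f,X)=\lim_{\varepsilon\to0}\widetilde h_{top}(f,X,\varepsilon)$. *)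

theory Defs
  imports "HOL-Analysis.Analysis"
begin

definition alpha_bowen_dist ::
  "('a::metric_space \<Rightarrow> 'a) \<Rightarrow> real \<Rightarrow> nat \<Rightarrow> 'a \<Rightarrow> 'a \<Rightarrow> real" where
  "alpha_bowen_dist f \<alpha> n x y =
     Max ((\<lambda>i. exp (\<alpha> * real i) * dist ((f ^^ i) x) ((f ^^ i) y)) ` {..<n})"

definition alpha_span_num ::
  "('a::metric_space \<Rightarrow> 'a) \<Rightarrow> real \<Rightarrow> 'a set \<Rightarrow> real \<Rightarrow> nat \<Rightarrow> nat" where
  "alpha_span_num f \<alpha> X \<epsilon> n =
     Inf {card E | E. finite E \<and> E \<subseteq> X \<and>
                     (\<forall>x\<in>X. \<exists>y\<in>E. alpha_bowen_dist f \<alpha> n x y < \<epsilon>)}"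

definition alpha_entropy ::
  "('a::metric_space \<Rightarrow> 'a) \<Rightarrow> 'a set \<Rightarrow> real \<Rightarrow> real \<Rightarrow> ereal" where
  "alpha_entropy f X \<alpha> \<epsilon> =
     limsup (\<lambda>n. ereal (ln (real (alpha_span_num f \<alpha> X \<epsilon> n)) / real n))"

definition bowen_ball ::
  "('a::metric_space \<Rightarrow> 'a) \<Rightarrow> nat \<Rightarrow> 'a \<Rightarrow> real \<Rightarrow> 'a set" where
  "bowen_ball f n x r = {y. \<forall>j<n. dist ((f ^^ j) x) ((f ^^ j) y) < r}"

definition bowen_cover_num ::
  "('a::metric_space \<Rightarrow> 'a) \<Rightarrow> 'a set \<Rightarrow> nat \<Rightarrow> real \<Rightarrow> nat" where
  "bowen_cover_num f X n r =
     Inf {card E | E. finite E \<and> E \<subseteq> X \<and> X \<subseteq> (\<Union>x\<in>E. bowen_ball f n x r)}"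

definition top_entropy :: "('a::metric_space \<Rightarrow> 'a) \<Rightarrow> 'a set \<Rightarrow> ereal" where
  "top_entropy f X =
     Lim (at_right (0::real))
       (\<lambda>\<epsilon>. limsup (\<lambda>n. ereal (ln (real (bowen_cover_num f X n \<epsilon>)) / real n)))"

definition neutral_entropy_eps :: "('a::metric_space \<Rightarrow> 'a) \<Rightarrow> 'a set \<Rightarrow> real \<Rightarrow> ereal" where
  "neutral_entropy_eps f X \<epsilon> =
     limsup (\<lambda>n. ereal (ln (real (bowen_cover_num f X n (exp (- real n * \<epsilon>)))) / real n))"

definition neutral_entropy :: "('a::metric_space \<Rightarrow> 'a) \<Rightarrow> 'a set \<Rightarrow> ereal" where
  "neutral_entropy f X = Lim (at_right (0::real)) (neutral_entropy_eps f X)"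

end

theory Submission
  imports Defs
begin

text \<open>Since d_n^\<alpha> \<ge> d_n for \<alpha> \<ge> 0, every d_n^\<alpha>-spanning set is d_n-spanning, so
  h_top(f,X,\<epsilon>) \<le> h^\<alpha>_top(f,X,\<epsilon>). Conversely, once e^(-\<alpha>n) \<le> \<epsilon>, every Bowen ball
  B_n(y, e^(-2\<alpha>n)) lies in the d_n^\<alpha>-ball of radius \<epsilon> about y, so
  h^\<alpha>_top(f,X,\<epsilon>) \<le> h~_top(f,X,2\<alpha>). All these quantities are monotone in their parameters,
  so the limits in \<alpha> and \<epsilon> are an infimum and a supremum, and
  sup_\<epsilon> inf_\<alpha> h^\<alpha>_top(f,X,\<epsilon>) is squeezed between h_top(f,X) and h~_top(f,X), which agree
  by hypothesis.\<close>

lemma funpow_image_subset: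
  assumes "f ` X \<subseteq> X"
  shows "(f ^^ i) ` X \<subseteq> X"
  by (induction i) (use assms in auto)

lemma continuous_on_funpow:
  assumes "continuous_on X f" "f ` X \<subseteq> X"
  shows "continuous_on X (f ^^ i)"
proof (induction i)
  case (Suc i)
  then show ?case
    using continuous_on_compose[OF Suc continuous_on_subset[OF assms(1) funpow_image_subset[OF assms(2)]]]
    by simp
qed (simp add: continuous_on_id)

lemma openin_bowen_ball:
  assumes "continuous_on X f" "f ` X \<subseteq> X"
  shows "openin (top_of_set X) (X \<inter> bowen_ball f n x r)"
proof -
  have "X \<inter> bowen_ball f n x r =
      (\<Inter>j\<in>{..<n}. X \<inter> (\<lambda>y. dist ((f ^^ j) x) ((f ^^ j) y)) -` {..<r}) \<inter> topspace (top_of_set X)"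
    by (auto simp: bowen_ball_def)
  also have "openin (top_of_set X) \<dots>"
    using continuous_on_funpow[OF assms]
    by (intro openin_INT continuous_openin_preimage_gen continuous_intros) auto
  finally show ?thesis .
qed

definition min_span_card :: "'a set \<Rightarrow> ('a \<Rightarrow> 'a \<Rightarrow> bool) \<Rightarrow> nat" where
  "min_span_card X R = Inf {card E | E. finite E \<and> E \<subseteq> X \<and> (\<forall>x\<in>X. \<exists>y\<in>E. R x y)}"

lemma alpha_span_num_eq_min_span_card:
  "alpha_span_num f \<alpha> X \<epsilon> n = min_span_card X (\<lambda>x y. alpha_bowen_dist f \<alpha> n x y < \<epsilon>)"
  by (simp add: alpha_span_num_def min_span_card_def)

lemma bowen_cover_num_eq_min_span_card:
  "bowen_cover_num f X n r = min_span_card X (\<lambda>x y. x \<in> bowen_ball f n y r)"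
  unfolding bowen_cover_num_def min_span_card_def by (simp add: subset_iff Ball_def)

lemma min_span_card_mono:
  assumes "finite E" "E \<subseteq> X" "\<forall>x\<in>X. \<exists>y\<in>E. R x y"
    and "\<And>x y. x \<in> X \<Longrightarrow> y \<in> X \<Longrightarrow> R x y \<Longrightarrow> S x y"
  shows "min_span_card X S \<le> min_span_card X R"
proof -
  have "{card E | E. finite E \<and> E \<subseteq> X \<and> (\<forall>x\<in>X. \<exists>y\<in>E. R x y)} \<noteq> {}"
    using assms(1-3) by blast
  then have "min_span_card X R \<in> {card E | E. finite E \<and> E \<subseteq> X \<and> (\<forall>x\<in>X. \<exists>y\<in>E. R x y)}"
    unfolding min_span_card_def by (rule Inf_nat_def1)
  then obtain E' where E': "min_span_card X R = card E'" "finite E'" "E' \<subseteq> X"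
      "\<forall>x\<in>X. \<exists>y\<in>E'. R x y"
    by blast
  then have "\<forall>x\<in>X. \<exists>y\<in>E'. S x y"
    using assms(4) by blast
  with E' show ?thesis
    unfolding min_span_card_def by (intro cInf_lower) auto
qed

text \<open>For n = 0 the weighted Bowen distance is Max {}, an unspecified value; hence the
  hypotheses n > 0 below.\<close>

lemma alpha_bowen_dist_less_iff:
  assumes "n > 0"
  shows "alpha_bowen_dist f \<alpha> n x y < \<epsilon> \<longleftrightarrow>
     (\<forall>i<n. exp (\<alpha> * real i) * dist ((f ^^ i) x) ((f ^^ i) y) < \<epsilon>)"
  unfolding alpha_bowen_dist_def using assms by (subst Max_less_iff) auto

lemma alpha_bowen_dist_mono:
  assumes "\<alpha> \<le> \<beta>" "n > 0"
  shows "alpha_bowen_dist f \<alpha> n x y \<le> alpha_bowen_dist f \<beta> n x y"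
proof -
  have "exp (\<alpha> * real i) * dist ((f ^^ i) x) ((f ^^ i) y) \<le> alpha_bowen_dist f \<beta> n x y"
    if "i < n" for i
  proof -
    have "exp (\<alpha> * real i) * dist ((f ^^ i) x) ((f ^^ i) y)
        \<le> exp (\<beta> * real i) * dist ((f ^^ i) x) ((f ^^ i) y)"
      using assms(1) by (intro mult_right_mono) (auto intro: mult_right_mono)
    also have "\<dots> \<le> alpha_bowen_dist f \<beta> n x y"
      unfolding alpha_bowen_dist_def using that by (intro Max_ge) auto
    finally show ?thesis .
  qed
  then show ?thesis
    using assms(2) by (auto simp: alpha_bowen_dist_def intro: Max.boundedI)
qed

lemma alpha_bowen_dist_less_if_mem_bowen_ball:
  assumes "n > 0" "x \<in> bowen_ball f n y r" "\<And>i. i < n \<Longrightarrow> exp (\<alpha> * real i) * r \<le> \<epsilon>"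
  shows "alpha_bowen_dist f \<alpha> n x y < \<epsilon>"
proof -
  have "exp (\<alpha> * real i) * dist ((f ^^ i) x) ((f ^^ i) y) < \<epsilon>" if "i < n" for i
  proof -
    have "dist ((f ^^ i) x) ((f ^^ i) y) < r"
      using assms(2) that by (simp add: bowen_ball_def dist_commute)
    then have "exp (\<alpha> * real i) * dist ((f ^^ i) x) ((f ^^ i) y) < exp (\<alpha> * real i) * r"
      by simp
    also have "\<dots> \<le> \<epsilon>" using assms(3) that .
    finally show ?thesis .
  qed
  then show ?thesis using assms(1) by (simp add: alpha_bowen_dist_less_iff)
qed

lemma mem_bowen_ball_if_alpha_bowen_dist_less:
  assumes "n > 0" "0 \<le> \<alpha>" "alpha_bowen_dist f \<alpha> n x y < \<epsilon>"
  shows "x \<in> bowen_ball f n y \<epsilon>"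
proof -
  have "dist ((f ^^ j) y) ((f ^^ j) x) < \<epsilon>" if "j < n" for j
  proof -
    have "dist ((f ^^ j) y) ((f ^^ j) x) \<le> exp (\<alpha> * real j) * dist ((f ^^ j) x) ((f ^^ j) y)"
      using assms(2) by (simp add: dist_commute mult_le_cancel_right1)
    also have "\<dots> < \<epsilon>" using assms that by (simp add: alpha_bowen_dist_less_iff)
    finally show ?thesis .
  qed
  then show ?thesis by (simp add: bowen_ball_def)
qed

lemma growth_rate_mono:
  fixes a b :: "nat \<Rightarrow> nat"
  assumes "eventually (\<lambda>n. a n \<le> b n) sequentially"
  shows "limsup (\<lambda>n. ereal (ln (real (a n)) / real n)) \<le> limsup (\<lambda>n. ereal (ln (real (b n)) / real n))"
proof (rule Limsup_mono)
  have ln_mono: "ln (real k) \<le> ln (real m)" if "k \<le> m" for k m :: nat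
    using that by (cases "k = 0"; cases "m = 0") auto
  show "eventually (\<lambda>n. ereal (ln (real (a n)) / real n) \<le> ereal (ln (real (b n)) / real n)) sequentially"
    using assms by (rule eventually_mono) (simp add: divide_right_mono ln_mono)
qed

lemma tendsto_at_right_zero_INF:
  fixes g :: "real \<Rightarrow> 'b::{complete_linorder, linorder_topology}"
  assumes "mono_on {0<..} g"
  shows "(g \<longlongrightarrow> (INF t\<in>{0<..}. g t)) (at_right 0)"
proof (rule decreasing_tendsto)
  show "eventually (\<lambda>t. (INF t\<in>{0<..}. g t) \<le> g t) (at_right 0)"
    using eventually_at_right_less[of 0] by eventually_elim (simp add: INF_lower)
next
  fix y assume "(INF t\<in>{0<..}. g t) < y"
  then obtain s where "s > 0" "g s < y" by (auto simp: INF_less_iff)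
  then show "eventually (\<lambda>t. g t < y) (at_right 0)"
    using assms unfolding eventually_at_right_field
    by (intro exI[of _ s]) (auto intro: le_less_trans dest: monotone_onD)
qed

lemma tendsto_at_right_zero_SUP:
  fixes g :: "real \<Rightarrow> 'b::{complete_linorder, linorder_topology}"
  assumes "antimono_on {0<..} g"
  shows "(g \<longlongrightarrow> (SUP t\<in>{0<..}. g t)) (at_right 0)"
proof (rule increasing_tendsto)
  show "eventually (\<lambda>t. g t \<le> (SUP t\<in>{0<..}. g t)) (at_right 0)"
    using eventually_at_right_less[of 0] by eventually_elim (simp add: SUP_upper)
next
  fix y assume "y < (SUP t\<in>{0<..}. g t)"
  then obtain s where "s > 0" "y < g s" by (auto simp: less_SUP_iff)
  then show "eventually (\<lambda>t. y < g t) (at_right 0)"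
    using assms unfolding eventually_at_right_field
    by (intro exI[of _ s]) (auto intro: less_le_trans dest: monotone_onD)
qed

definition top_entropy_eps :: "('a::metric_space \<Rightarrow> 'a) \<Rightarrow> 'a set \<Rightarrow> real \<Rightarrow> ereal" where
  "top_entropy_eps f X \<epsilon> = limsup (\<lambda>n. ereal (ln (real (bowen_cover_num f X n \<epsilon>)) / real n))"

context
  fixes X :: "'a::metric_space set" and f :: "'a \<Rightarrow> 'a"
  assumes compact: "compact X" and continuous: "continuous_on X f" and maps_to: "f ` X \<subseteq> X"
begin

lemma finite_bowen_cover:
  assumes "r > 0"
  obtains E where "finite E" "E \<subseteq> X" "\<forall>x\<in>X. \<exists>y\<in>E. x \<in> bowen_ball f n y r"
proof -
  let ?C = "(\<lambda>y. X \<inter> bowen_ball f n y r) ` X"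
  have "\<forall>c\<in>?C. openin (top_of_set X) c"
    using openin_bowen_ball[OF continuous maps_to] by blast
  moreover have "X \<subseteq> \<Union>?C"
    using assms by (auto simp: bowen_ball_def)
  ultimately obtain D where D: "D \<subseteq> ?C" "finite D" "X \<subseteq> \<Union>D"
    using compact unfolding compact_eq_openin_cover by meson
  then obtain E where E: "E \<subseteq> X" "finite E" "D = (\<lambda>y. X \<inter> bowen_ball f n y r) ` E"
    by (meson finite_subset_image)
  have "\<forall>x\<in>X. \<exists>y\<in>E. x \<in> bowen_ball f n y r"
    using D(3) E(3) by blast
  with E(2,1) show ?thesis
    by (rule that)
qed

lemma finite_alpha_spanning_set:
  assumes "\<epsilon> > 0" "n > 0"
  obtains E where "finite E" "E \<subseteq> X" "\<forall>x\<in>X. \<exists>y\<in>E. alpha_bowen_dist f \<alpha> n x y < \<epsilon>"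
proof -
  define r where "r = \<epsilon> / exp (\<bar>\<alpha>\<bar> * real n)"
  have r: "r > 0"
    using assms(1) by (simp add: r_def)
  have weight: "exp (\<alpha> * real i) * r \<le> \<epsilon>" if "i < n" for i
  proof -
    have "\<alpha> * real i \<le> \<bar>\<alpha>\<bar> * real n"
      using that by (intro order.trans[OF mult_right_mono mult_left_mono]) auto
    then show ?thesis
      using r by (simp add: r_def field_simps)
  qed
  obtain E where E: "finite E" "E \<subseteq> X" "\<forall>x\<in>X. \<exists>y\<in>E. x \<in> bowen_ball f n y r"
    using finite_bowen_cover[OF r] .
  have close: "alpha_bowen_dist f \<alpha> n x y < \<epsilon>" if "x \<in> bowen_ball f n y r" for x y
    using alpha_bowen_dist_less_if_mem_bowen_ball[OF assms(2) that weight] .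
  have "\<forall>x\<in>X. \<exists>y\<in>E. alpha_bowen_dist f \<alpha> n x y < \<epsilon>"
    using E(3) close by blast
  with E(1,2) show ?thesis
    by (rule that)
qed

lemma bowen_cover_num_antimono:
  assumes "0 < r" "r \<le> s"
  shows "bowen_cover_num f X n s \<le> bowen_cover_num f X n r"
proof -
  obtain E where "finite E" "E \<subseteq> X" "\<forall>x\<in>X. \<exists>y\<in>E. x \<in> bowen_ball f n y r"
    using finite_bowen_cover[OF assms(1)] .
  then show ?thesis
    unfolding bowen_cover_num_eq_min_span_card
    by (rule min_span_card_mono) (use assms(2) in \<open>auto simp: bowen_ball_def\<close>)
qed

lemma alpha_span_num_mono:
  assumes "0 < \<epsilon>" "\<alpha> \<le> \<beta>" "n > 0"
  shows "alpha_span_num f \<alpha> X \<epsilon> n \<le> alpha_span_num f \<beta> X \<epsilon> n"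
proof -
  obtain E where "finite E" "E \<subseteq> X" "\<forall>x\<in>X. \<exists>y\<in>E. alpha_bowen_dist f \<beta> n x y < \<epsilon>"
    using finite_alpha_spanning_set[OF assms(1,3)] .
  then show ?thesis
    unfolding alpha_span_num_eq_min_span_card
    by (rule min_span_card_mono) (use alpha_bowen_dist_mono[OF assms(2,3)] in \<open>auto intro: le_less_trans\<close>)
qed

lemma alpha_span_num_antimono:
  assumes "0 < \<epsilon>" "\<epsilon> \<le> \<delta>" "n > 0"
  shows "alpha_span_num f \<alpha> X \<delta> n \<le> alpha_span_num f \<alpha> X \<epsilon> n"
proof -
  obtain E where "finite E" "E \<subseteq> X" "\<forall>x\<in>X. \<exists>y\<in>E. alpha_bowen_dist f \<alpha> n x y < \<epsilon>"
    using finite_alpha_spanning_set[OF assms(1,3)] .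
  then show ?thesis
    unfolding alpha_span_num_eq_min_span_card
    by (rule min_span_card_mono) (use assms(2) in auto)
qed

lemma bowen_cover_num_le_alpha_span_num:
  assumes "0 < \<epsilon>" "0 \<le> \<alpha>" "n > 0"
  shows "bowen_cover_num f X n \<epsilon> \<le> alpha_span_num f \<alpha> X \<epsilon> n"
proof -
  obtain E where "finite E" "E \<subseteq> X" "\<forall>x\<in>X. \<exists>y\<in>E. alpha_bowen_dist f \<alpha> n x y < \<epsilon>"
    using finite_alpha_spanning_set[OF assms(1,3)] .
  then show ?thesis
    unfolding alpha_span_num_eq_min_span_card bowen_cover_num_eq_min_span_card
    by (rule min_span_card_mono) (rule mem_bowen_ball_if_alpha_bowen_dist_less[OF assms(3,2)])
qed

lemma alpha_span_num_le_bowen_cover_num: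
  assumes "0 < r" "n > 0" "\<And>i. i < n \<Longrightarrow> exp (\<alpha> * real i) * r \<le> \<epsilon>"
  shows "alpha_span_num f \<alpha> X \<epsilon> n \<le> bowen_cover_num f X n r"
proof -
  obtain E where "finite E" "E \<subseteq> X" "\<forall>x\<in>X. \<exists>y\<in>E. x \<in> bowen_ball f n y r"
    using finite_bowen_cover[OF assms(1)] .
  then show ?thesis
    unfolding alpha_span_num_eq_min_span_card bowen_cover_num_eq_min_span_card
    by (rule min_span_card_mono) (rule alpha_bowen_dist_less_if_mem_bowen_ball[OF assms(2) _ assms(3)])
qed

lemma top_entropy_eps_antimono: "antimono_on {0<..} (top_entropy_eps f X)"
proof (rule monotone_onI)
  fix r s :: real assume "r \<in> {0<..}" "r \<le> s"
  then show "top_entropy_eps f X s \<le> top_entropy_eps f X r"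
    unfolding top_entropy_eps_def
    by (intro growth_rate_mono always_eventually) (simp add: bowen_cover_num_antimono)
qed

lemma neutral_entropy_eps_mono: "mono (neutral_entropy_eps f X)"
proof (rule monoI)
  fix a b :: real assume "a \<le> b"
  then show "neutral_entropy_eps f X a \<le> neutral_entropy_eps f X b"
    unfolding neutral_entropy_eps_def
    using \<open>a \<le> b\<close>
    by (intro growth_rate_mono always_eventually allI bowen_cover_num_antimono exp_gt_zero)
       (auto intro: mult_left_mono)
qed

lemma alpha_entropy_mono:
  assumes "0 < \<epsilon>"
  shows "mono (\<lambda>\<alpha>. alpha_entropy f X \<alpha> \<epsilon>)"
proof (rule monoI)
  fix \<alpha> \<beta> :: real assume "\<alpha> \<le> \<beta>"
  then show "alpha_entropy f X \<alpha> \<epsilon> \<le> alpha_entropy f X \<beta> \<epsilon>"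
    unfolding alpha_entropy_def
    by (intro growth_rate_mono eventually_mono[OF eventually_gt_at_top[of 0]] alpha_span_num_mono)
       (use assms in auto)
qed

lemma alpha_entropy_antimono: "antimono_on {0<..} (alpha_entropy f X \<alpha>)"
proof (rule monotone_onI)
  fix \<epsilon> \<delta> :: real assume "\<epsilon> \<in> {0<..}" "\<epsilon> \<le> \<delta>"
  then show "alpha_entropy f X \<alpha> \<delta> \<le> alpha_entropy f X \<alpha> \<epsilon>"
    unfolding alpha_entropy_def
    by (intro growth_rate_mono eventually_mono[OF eventually_gt_at_top[of 0]] alpha_span_num_antimono)
       auto
qed

lemma top_entropy_eps_le_alpha_entropy:
  assumes "0 < \<epsilon>" "0 \<le> \<alpha>"
  shows "top_entropy_eps f X \<epsilon> \<le> alpha_entropy f X \<alpha> \<epsilon>"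
  unfolding top_entropy_eps_def alpha_entropy_def
  by (intro growth_rate_mono eventually_mono[OF eventually_gt_at_top[of 0]]
      bowen_cover_num_le_alpha_span_num assms)

lemma alpha_entropy_le_neutral_entropy_eps:
  assumes "0 < \<alpha>" "0 < \<epsilon>"
  shows "alpha_entropy f X \<alpha> \<epsilon> \<le> neutral_entropy_eps f X (2 * \<alpha>)"
proof -
  obtain N :: nat where "- ln \<epsilon> / \<alpha> \<le> real N"
    using real_arch_simple by blast
  then have N: "- ln \<epsilon> \<le> \<alpha> * real N"
    using assms(1) by (simp add: field_simps)
  have weight: "exp (\<alpha> * real i) * exp (- real n * (2 * \<alpha>)) \<le> \<epsilon>" if "N \<le> n" "i < n" for n i
  proof -
    have "\<alpha> * real i \<le> \<alpha> * real n" "\<alpha> * real N \<le> \<alpha> * real n"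
      using that assms(1) by (auto intro: mult_left_mono)
    with N have "\<alpha> * real i - 2 * (\<alpha> * real n) \<le> ln \<epsilon>"
      by linarith
    then have "exp (\<alpha> * real i - 2 * (\<alpha> * real n)) \<le> \<epsilon>"
      using assms(2) by (metis exp_le_cancel_iff exp_ln)
    moreover have "exp (\<alpha> * real i) * exp (- real n * (2 * \<alpha>)) = exp (\<alpha> * real i - 2 * (\<alpha> * real n))"
      unfolding exp_add[symmetric] by (simp add: algebra_simps)
    ultimately show ?thesis
      by simp
  qed
  show ?thesis
    unfolding alpha_entropy_def neutral_entropy_eps_def
    by (intro growth_rate_mono eventually_mono[OF eventually_ge_at_top[of "max N 1"]]
        alpha_span_num_le_bowen_cover_num weight) auto
qed

lemma top_entropy_eq_SUP: "top_entropy f X = (SUP \<epsilon>\<in>{0<..}. top_entropy_eps f X \<epsilon>)"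
proof -
  have "top_entropy f X = Lim (at_right 0) (top_entropy_eps f X)"
    unfolding top_entropy_def top_entropy_eps_def[abs_def] ..
  also have "\<dots> = (SUP \<epsilon>\<in>{0<..}. top_entropy_eps f X \<epsilon>)"
    by (rule tendsto_Lim[OF trivial_limit_at_right_real
          tendsto_at_right_zero_SUP[OF top_entropy_eps_antimono]])
  finally show ?thesis .
qed

lemma neutral_entropy_eq_INF: "neutral_entropy f X = (INF a\<in>{0<..}. neutral_entropy_eps f X a)"
  unfolding neutral_entropy_def
  by (rule tendsto_Lim[OF trivial_limit_at_right_real
        tendsto_at_right_zero_INF[OF mono_imp_mono_on[OF neutral_entropy_eps_mono]]])

lemma top_entropy_le_SUP_INF_alpha_entropy:
  "top_entropy f X \<le> (SUP \<epsilon>\<in>{0<..}. INF \<alpha>\<in>{0<..}. alpha_entropy f X \<alpha> \<epsilon>)"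
  unfolding top_entropy_eq_SUP
  by (intro SUP_subset_mono INF_greatest top_entropy_eps_le_alpha_entropy) auto

lemma SUP_INF_alpha_entropy_le_neutral_entropy:
  "(SUP \<epsilon>\<in>{0<..}. INF \<alpha>\<in>{0<..}. alpha_entropy f X \<alpha> \<epsilon>) \<le> neutral_entropy f X"
  unfolding neutral_entropy_eq_INF
proof (intro SUP_least INF_greatest)
  fix \<epsilon> a :: real assume "\<epsilon> \<in> {0<..}" "a \<in> {0<..}"
  then have "(INF \<alpha>\<in>{0<..}. alpha_entropy f X \<alpha> \<epsilon>) \<le> alpha_entropy f X (a / 2) \<epsilon>"
    by (intro INF_lower) simp
  also have "\<dots> \<le> neutral_entropy_eps f X (2 * (a / 2))"
    using \<open>\<epsilon> \<in> {0<..}\<close> \<open>a \<in> {0<..}\<close> by (intro alpha_entropy_le_neutral_entropy_eps) auto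
  finally show "(INF \<alpha>\<in>{0<..}. alpha_entropy f X \<alpha> \<epsilon>) \<le> neutral_entropy_eps f X a"
    by simp
qed

lemma tendsto_alpha_entropy_INF:
  assumes "0 < \<epsilon>"
  shows "((\<lambda>\<alpha>. alpha_entropy f X \<alpha> \<epsilon>) \<longlongrightarrow> (INF \<alpha>\<in>{0<..}. alpha_entropy f X \<alpha> \<epsilon>)) (at_right 0)"
  by (rule tendsto_at_right_zero_INF[OF mono_imp_mono_on[OF alpha_entropy_mono[OF assms]]])

lemma INF_alpha_entropy_antimono:
  "antimono_on {0<..} (\<lambda>\<epsilon>. INF \<alpha>\<in>{0<..}. alpha_entropy f X \<alpha> \<epsilon>)"
proof (rule monotone_onI)
  fix \<epsilon> \<delta> :: real assume "\<epsilon> \<in> {0<..}" "\<delta> \<in> {0<..}" "\<epsilon> \<le> \<delta>"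
  then show "(INF \<alpha>\<in>{0<..}. alpha_entropy f X \<alpha> \<delta>) \<le> (INF \<alpha>\<in>{0<..}. alpha_entropy f X \<alpha> \<epsilon>)"
    by (intro INF_mono' monotone_onD[OF alpha_entropy_antimono])
qed

end

theorem mainTheorem14:
  fixes X :: "'a::metric_space set" and f :: "'a \<Rightarrow> 'a"
  assumes "compact X" and "continuous_on X f" and "f ` X \<subseteq> X"
    and "neutral_entropy f X = top_entropy f X"
  shows "(\<forall>\<epsilon>>0. ((\<lambda>\<alpha>. alpha_entropy f X \<alpha> \<epsilon>)
              \<longlongrightarrow> Lim (at_right 0) (\<lambda>\<alpha>. alpha_entropy f X \<alpha> \<epsilon>)) (at_right 0))
       \<and> ((\<lambda>\<epsilon>. Lim (at_right 0) (\<lambda>\<alpha>. alpha_entropy f X \<alpha> \<epsilon>))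
              \<longlongrightarrow> top_entropy f X) (at_right 0)
       \<and> top_entropy f X = (SUP \<epsilon>\<in>{0<..}. INF \<alpha>\<in>{0<..}. alpha_entropy f X \<alpha> \<epsilon>)"
proof -
  note system = assms(1-3)
  define g where "g \<epsilon> = (INF \<alpha>\<in>{0<..}. alpha_entropy f X \<alpha> \<epsilon>)" for \<epsilon>
  have inner: "((\<lambda>\<alpha>. alpha_entropy f X \<alpha> \<epsilon>) \<longlongrightarrow> g \<epsilon>) (at_right 0)" if "0 < \<epsilon>" for \<epsilon>
    unfolding g_def using tendsto_alpha_entropy_INF[OF system that] .
  have Lim_inner: "Lim (at_right 0) (\<lambda>\<alpha>. alpha_entropy f X \<alpha> \<epsilon>) = g \<epsilon>" if "0 < \<epsilon>" for \<epsilon>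
    using tendsto_Lim[OF trivial_limit_at_right_real inner[OF that]] .
  have SUP_g: "top_entropy f X = (SUP \<epsilon>\<in>{0<..}. g \<epsilon>)"
    using top_entropy_le_SUP_INF_alpha_entropy[OF system]
      SUP_INF_alpha_entropy_le_neutral_entropy[OF system, unfolded assms(4)]
    unfolding g_def by (rule antisym)
  have "(g \<longlongrightarrow> top_entropy f X) (at_right 0)"
    unfolding SUP_g g_def by (rule tendsto_at_right_zero_SUP[OF INF_alpha_entropy_antimono[OF system]])
  moreover have "eventually (\<lambda>\<epsilon>. g \<epsilon> = Lim (at_right 0) (\<lambda>\<alpha>. alpha_entropy f X \<alpha> \<epsilon>)) (at_right 0)"
    using eventually_at_right_less[of 0] by (rule eventually_mono) (simp add: Lim_inner)
  ultimately have outer: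
    "((\<lambda>\<epsilon>. Lim (at_right 0) (\<lambda>\<alpha>. alpha_entropy f X \<alpha> \<epsilon>)) \<longlongrightarrow> top_entropy f X) (at_right 0)"
    by (rule Lim_transform_eventually)
  have inner_Lim: "\<forall>\<epsilon>>0. ((\<lambda>\<alpha>. alpha_entropy f X \<alpha> \<epsilon>)
      \<longlongrightarrow> Lim (at_right 0) (\<lambda>\<alpha>. alpha_entropy f X \<alpha> \<epsilon>)) (at_right 0)"
    using inner Lim_inner by simp
  have "top_entropy f X = (SUP \<epsilon>\<in>{0<..}. INF \<alpha>\<in>{0<..}. alpha_entropy f X \<alpha> \<epsilon>)"
    using SUP_g unfolding g_def .
  with inner_Lim outer show ?thesis
    by blast
qed

end
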